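(* Let $p\geq3$ be a prime, $\omega=e^{2\pi i/p}$, and let $M=(m_{ij})_{i,j=0}^{p-1}$ be a circulant matrix with entries in $\mathbb Z/p\mathbb Z$. Then $U=(\omega^{m_{ij}})_{i,j=0}^{p-1}$ is a complex Hadamard matrix if and only if there exist $a,b,c\in\mathbb Z/p\mathbb Z$ with $a\neq0$ such that $m_{0j}=aj^2+bj+c$ for all $j\in\mathbb Z/p\mathbb Z$.
   Context: A complex Hadamard matrix has all entries of modulus one and pairwise orthogonal rows. $M$ circulant means $m_{ij}$ depends only on $j-i$ modulo $p$. *)

theory Defs
  imports Complex_Main "HOL-Number_Theory.Cong"
begin

text \<open>Matrices indexed by 0..p-1 are represented as functions nat => nat => _,
  only the entries with indices < p being relevant. Entries of M lie in Z/pZ,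
  represented by integers taken modulo p.\<close>

definition circulant_mod :: "nat \<Rightarrow> (nat \<Rightarrow> nat \<Rightarrow> int) \<Rightarrow> bool" where
  "circulant_mod p M \<longleftrightarrow>
     (\<forall>i<p. \<forall>j<p. \<forall>k<p. \<forall>l<p.
        (int j - int i) mod int p = (int l - int k) mod int p \<longrightarrow> [M i j = M k l] (mod int p))"

definition complex_hadamard :: "nat \<Rightarrow> (nat \<Rightarrow> nat \<Rightarrow> complex) \<Rightarrow> bool" where
  "complex_hadamard n U \<longleftrightarrow>
     (\<forall>i<n. \<forall>j<n. norm (U i j) = 1) \<and>
     (\<forall>i<n. \<forall>k<n. i \<noteq> k \<longrightarrow> (\<Sum>j<n. U i j * cnj (U k j)) = 0)"

text \<open>omega^m with omega = exp(2 pi i / p); well defined for m in Z/pZ.\<close>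
definition root_pow :: "nat \<Rightarrow> int \<Rightarrow> complex" where
  "root_pow p m = cis (2 * pi * real_of_int m / real p)"

end

theory Submission
  imports Defs "HOL-Computational_Algebra.Polynomial_Factorial" "HOL-Number_Theory.Residues"
begin

text \<open>
  Write \<open>f = M 0\<close> for the first row. By circulancy the inner product of row \<open>s\<close> with row \<open>0\<close>
  is \<open>\<Sum>x. \<omega> ^ (f (x - s) - f x)\<close>. Since \<open>\<omega>\<close> has degree \<open>p - 1\<close> over the rationals (Eisenstein's
  criterion for \<open>\<Phi>\<^sub>p (X + 1)\<close>), a sum of \<open>p\<close> powers of \<open>\<omega>\<close> vanishes only if each power occurs
  exactly once. So \<open>U\<close> is Hadamard only if \<open>f\<close> is planar: every difference function
  \<open>x \<mapsto> f (x - s) - f x\<close> with \<open>s \<noteq> 0\<close> is a permutation of \<open>\<int>/p\<int>\<close>.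

  A planar \<open>f\<close> is quadratic. Interpolate \<open>f\<close> by a polynomial \<open>F\<close> of degree \<open>d \<le> p - 1\<close>, write
  \<open>p - 1 = m d + r\<close> with \<open>r < d\<close>, and evaluate \<open>T = \<Sum>x y. (y - x) ^ 2r * (F y - F x) ^ 2m\<close>
  modulo \<open>p\<close> in two ways. Substituting \<open>y = x - s\<close>, planarity and \<open>\<Sum>x. x ^ k \<equiv> 0\<close> for
  \<open>k < p - 1\<close> give \<open>T \<equiv> 0\<close> as soon as \<open>2m < p - 1\<close>, in particular if \<open>d \<ge> 3\<close>. Expanding both
  binomials instead writes \<open>T\<close> in terms of the moments \<open>\<Sum>x. x ^ l * F x ^ i\<close>, which vanish
  modulo \<open>p\<close> when \<open>l + i d < p - 1\<close>; only the product for \<open>(l, i) = (r, m)\<close> survives, and it is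
  \<open>\<plusminus> (2r choose r) (2m choose m) lc(F) ^ 2m \<noteq> 0\<close>. Affine functions are never planar, so \<open>d = 2\<close>.

  Conversely, for a quadratic first row the difference of two rows is affine in \<open>j\<close> with unit
  slope, so their inner product is a geometric sum over a nontrivial \<open>p\<close>-th root of unity.
\<close>

text \<open>Importing \<open>Residues\<close> (for \<open>fermat_theorem\<close>) brings in \<open>HOL-Algebra\<close>, whose constants
  \<open>coeff\<close>, \<open>monom\<close> and \<open>smult\<close> would shadow those of the polynomial library.\<close>

hide_const (open) up_ring.coeff up_ring.monom module.smult

lemma map_poly_of_int_mult:
  "map_poly (of_int :: int \<Rightarrow> 'a::comm_ring_1) (P * Q) = map_poly of_int P * map_poly of_int Q"
  by (rule poly_eqI) (simp add: coeff_map_poly coeff_mult)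

lemma map_poly_of_int_add:
  "map_poly (of_int :: int \<Rightarrow> 'a::comm_ring_1) (P + Q) = map_poly of_int P + map_poly of_int Q"
  by (rule poly_eqI) (simp add: coeff_map_poly)

lemma poly_eq_sum_coeff:
  fixes P :: "'a::comm_semiring_1 poly"
  assumes "degree P \<le> n"
  shows "poly P x = (\<Sum>i\<le>n. coeff P i * x ^ i)"
proof -
  have "poly P x = poly (\<Sum>i\<le>n. monom (coeff P i) i) x"
    by (simp add: poly_as_sum_of_monoms' assms)
  also have "\<dots> = (\<Sum>i\<le>n. coeff P i * x ^ i)"
    by (simp add: poly_sum poly_monom)
  finally show ?thesis .
qed

lemma pcompose_power_left: "pcompose (r ^ i) q = pcompose r q ^ i"
  by (induction i) (simp_all add: pcompose_mult pcompose_1)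

lemma coeff_one_plus_X_power: "coeff ([:1, 1:] ^ n) k = (of_nat (n choose k) :: 'a::comm_semiring_1)"
proof (cases "k \<le> n")
  case True
  then show ?thesis
    by (simp add: coeff_linear_poly_power)
next
  case False
  then have "degree ([:1, 1::'a:] ^ n) < k"
    using degree_power_le[of "[:1, 1::'a:]" n] by simp
  then show ?thesis
    using False by (simp add: coeff_eq_0 binomial_eq_0)
qed

lemma prime_elem_dvd_if_smult_eq_mult:
  fixes G P q :: "int poly"
  assumes G: "prime_elem G" and a: "a \<noteq> 0" and eq: "smult a G = P * q" and P: "degree P \<noteq> 0"
  shows "G dvd P"
proof -
  have "G dvd P * q"
    using eq dvd_smult[OF dvd_refl, of G a] by simp
  then have "G dvd P \<or> G dvd q"
    using G by (simp add: prime_elem_dvd_mult_iff)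
  moreover have "\<not> G dvd q"
  proof
    assume "G dvd q"
    then obtain s where "q = G * s" ..
    then have "[:a:] * G = (P * s) * G"
      using eq by (simp add: ac_simps)
    moreover have "G \<noteq> 0"
      using G by auto
    ultimately have "[:a:] = P * s"
      by (metis mult_right_cancel)
    moreover have "P \<noteq> 0" "s \<noteq> 0"
      using a calculation by auto
    ultimately have "degree P + degree s = 0"
      by (metis degree_mult_eq degree_pCons_0)
    with P show False
      by simp
  qed
  ultimately show ?thesis
    by blast
qed

lemma sum_by_fibres:
  fixes \<phi> :: "nat \<Rightarrow> 'a::comm_semiring_1" and g :: "nat \<Rightarrow> nat"
  assumes "g ` {..<n} \<subseteq> {..<m}"
  shows "(\<Sum>j<n. \<phi> (g j)) = (\<Sum>r<m. of_nat (card {j\<in>{..<n}. g j = r}) * \<phi> r)"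
  using sum.group[where h = "\<lambda>j. \<phi> (g j)", OF finite_lessThan finite_lessThan assms] by simp

lemma sum_swap_nested:
  "(\<Sum>x\<in>X. \<Sum>y\<in>Y. \<Sum>l\<in>L. \<Sum>i\<in>I. t x y l i) = (\<Sum>l\<in>L. \<Sum>i\<in>I. \<Sum>x\<in>X. \<Sum>y\<in>Y. t x y l i)"
proof -
  have "(\<Sum>x\<in>X. \<Sum>y\<in>Y. \<Sum>l\<in>L. \<Sum>i\<in>I. t x y l i) = (\<Sum>x\<in>X. \<Sum>l\<in>L. \<Sum>y\<in>Y. \<Sum>i\<in>I. t x y l i)"
    by (rule sum.cong[OF refl], rule sum.swap)
  also have "\<dots> = (\<Sum>l\<in>L. \<Sum>x\<in>X. \<Sum>y\<in>Y. \<Sum>i\<in>I. t x y l i)"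
    by (rule sum.swap)
  also have "\<dots> = (\<Sum>l\<in>L. \<Sum>i\<in>I. \<Sum>x\<in>X. \<Sum>y\<in>Y. t x y l i)"
    by (rule sum.cong[OF refl], subst sum.swap, rule sum.cong[OF refl], rule sum.swap)
  finally show ?thesis .
qed

lemma double_sum_diff_power_expand:
  fixes u v :: "'b \<Rightarrow> 'a::comm_ring_1"
  shows "(\<Sum>x\<in>X. \<Sum>y\<in>X. (u y - u x) ^ J * (v y - v x) ^ K) =
    (\<Sum>l\<le>J. \<Sum>i\<le>K. of_nat (J choose l) * of_nat (K choose i) * (- 1) ^ (J - l) * (- 1) ^ (K - i) *
      ((\<Sum>y\<in>X. u y ^ l * v y ^ i) * (\<Sum>x\<in>X. u x ^ (J - l) * v x ^ (K - i))))"
    (is "_ = (\<Sum>l\<le>J. \<Sum>i\<le>K. ?c l i * _)")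
proof -
  let ?t = "\<lambda>x y l i. ?c l i * ((u y ^ l * v y ^ i) * (u x ^ (J - l) * v x ^ (K - i)))"
  have expand: "(u y - u x) ^ J * (v y - v x) ^ K = (\<Sum>l\<le>J. \<Sum>i\<le>K. ?t x y l i)" for x y
  proof -
    have "(u y - u x) ^ J * (v y - v x) ^ K
      = (\<Sum>l\<le>J. of_nat (J choose l) * u y ^ l * (- u x) ^ (J - l))
        * (\<Sum>i\<le>K. of_nat (K choose i) * v y ^ i * (- v x) ^ (K - i))"
      using binomial_ring[of "u y" "- u x" J] binomial_ring[of "v y" "- v x" K] by simp
    also have "\<dots> = (\<Sum>l\<le>J. \<Sum>i\<le>K. ?t x y l i)"
      by (simp add: sum_product power_minus[of "u x"] power_minus[of "v x"] mult_ac)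
    finally show ?thesis .
  qed
  have "(\<Sum>x\<in>X. \<Sum>y\<in>X. (u y - u x) ^ J * (v y - v x) ^ K) = (\<Sum>x\<in>X. \<Sum>y\<in>X. \<Sum>l\<le>J. \<Sum>i\<le>K. ?t x y l i)"
    by (simp only: expand)
  also have "\<dots> = (\<Sum>l\<le>J. \<Sum>i\<le>K. \<Sum>x\<in>X. \<Sum>y\<in>X. ?t x y l i)"
    by (rule sum_swap_nested)
  also have "\<dots> = (\<Sum>l\<le>J. \<Sum>i\<le>K. ?c l i *
      ((\<Sum>y\<in>X. u y ^ l * v y ^ i) * (\<Sum>x\<in>X. u x ^ (J - l) * v x ^ (K - i))))"
  proof (intro sum.cong refl)
    fix l i
    have "(\<Sum>x\<in>X. \<Sum>y\<in>X. ?t x y l i) = ?c l i * (\<Sum>y\<in>X. \<Sum>x\<in>X. (u y ^ l * v y ^ i) * (u x ^ (J - l) * v x ^ (K - i)))"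
      by (subst sum.swap) (simp add: sum_distrib_left)
    then show "(\<Sum>x\<in>X. \<Sum>y\<in>X. ?t x y l i) = ?c l i *
      ((\<Sum>y\<in>X. u y ^ l * v y ^ i) * (\<Sum>x\<in>X. u x ^ (J - l) * v x ^ (K - i)))"
      by (simp only: sum_product)
  qed
  finally show ?thesis .
qed

section \<open>Eisenstein's criterion and the cyclotomic polynomial\<close>

lemma eisenstein_degree_eq_0:
  fixes f a b :: "int poly" and q :: int
  assumes q: "prime q" and f: "f = a * b"
    and lead: "\<not> q dvd lead_coeff f" and low: "\<forall>i<degree f. q dvd coeff f i"
    and b0: "\<not> q dvd coeff b 0"
  shows "degree b = 0"
proof -
  have "\<not> q dvd lead_coeff a"
    using lead by (metis dvd_mult2 f lead_coeff_mult)
  then obtain i where i: "\<not> q dvd coeff a i"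
    by blast
  define k where "k = (LEAST i. \<not> q dvd coeff a i)"
  have k: "\<not> q dvd coeff a k"
    unfolding k_def using i by (rule LeastI)
  have below_k: "q dvd coeff a t" if "t < k" for t
    using that not_less_Least unfolding k_def by blast
  have "coeff f k = (\<Sum>t<k. coeff a t * coeff b (k - t)) + coeff a k * coeff b 0"
    by (simp add: f coeff_mult lessThan_Suc_atMost[symmetric])
  moreover have "q dvd (\<Sum>t<k. coeff a t * coeff b (k - t))"
    by (intro dvd_sum) (simp add: below_k)
  moreover have "\<not> q dvd coeff a k * coeff b 0"
    using k b0 q by (simp add: prime_dvd_mult_iff)
  ultimately have "\<not> q dvd coeff f k"
    by (metis dvd_add_right_iff)
  with low have "degree f \<le> k"
    by (meson not_less)
  moreover have "k \<le> degree a"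
    using k by (metis dvd_0_right le_degree)
  moreover have "a \<noteq> 0" "b \<noteq> 0"
    using lead f by auto
  ultimately show ?thesis
    using f by (simp add: degree_mult_eq)
qed

lemma eisenstein_criterion:
  fixes f a b :: "int poly" and q :: int
  assumes q: "prime q" and f: "f = a * b"
    and lead: "\<not> q dvd lead_coeff f" and low: "\<forall>i<degree f. q dvd coeff f i"
    and const: "\<not> q\<^sup>2 dvd coeff f 0"
  shows "degree a = 0 \<or> degree b = 0"
proof (cases "degree f = 0")
  case True
  moreover have "a \<noteq> 0" "b \<noteq> 0"
    using lead f by auto
  ultimately show ?thesis
    using f by (simp add: degree_mult_eq)
next
  case False
  have f0: "coeff f 0 = coeff a 0 * coeff b 0"
    by (simp add: f coeff_mult_0)
  have "q dvd coeff a 0 \<or> q dvd coeff b 0"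
    using low[rule_format, of 0] False q f0 by (simp add: prime_dvd_mult_iff)
  moreover have "\<not> (q dvd coeff a 0 \<and> q dvd coeff b 0)"
    using const f0 by (auto simp: power2_eq_square intro: mult_dvd_mono)
  ultimately show ?thesis
    using eisenstein_degree_eq_0[OF q f lead low]
      eisenstein_degree_eq_0[OF q f[unfolded mult.commute[of a]] lead low] by auto
qed

definition geom_poly :: "nat \<Rightarrow> int poly" where
  "geom_poly n = (\<Sum>i<n. monom 1 i)"

lemma coeff_geom_poly: "coeff (geom_poly n) i = (if i < n then 1 else 0)"
  by (simp add: geom_poly_def coeff_sum)

lemma degree_geom_poly: "n > 0 \<Longrightarrow> degree (geom_poly n) = n - 1"
  by (intro antisym degree_le le_degree) (auto simp: coeff_geom_poly)

lemma content_geom_poly: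
  assumes "n > 0"
  shows "content (geom_poly n) = 1"
proof -
  have "content (geom_poly n) dvd 1"
    using content_dvd_coeff[of "geom_poly n" 0] assms by (simp add: coeff_geom_poly)
  then show ?thesis
    by (metis is_unit_normalize normalize_content)
qed

lemma poly_geom_poly:
  fixes x :: "'a::comm_ring_1"
  shows "poly (map_poly of_int (geom_poly n)) x = (\<Sum>i<n. x ^ i)"
proof -
  have "map_poly of_int (geom_poly n) = (\<Sum>i<n. monom (1::'a) i)"
    by (rule poly_eqI) (simp add: coeff_map_poly coeff_geom_poly coeff_sum)
  then show ?thesis
    by (simp add: poly_sum poly_monom)
qed

lemma coeff_geom_poly_shift:
  assumes "n > 0"
  shows "coeff (pcompose (geom_poly n) [:1, 1:]) k = int (n choose Suc k)"
proof -
  have "coeff (pcompose (geom_poly n) [:1, 1:]) k = (\<Sum>i<n. coeff ([:1, 1::int:] ^ i) k)"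
    by (simp add: geom_poly_def pcompose_sum monom_altdef pcompose_smult pcompose_power_left
        pcompose_pCons coeff_sum)
  also have "\<dots> = (\<Sum>i\<le>n - 1. int (i choose k))"
    using assms by (intro sum.cong) (auto simp: coeff_one_plus_X_power)
  also have "\<dots> = int (n choose Suc k)"
    using assms by (simp flip: of_nat_sum add: sum_choose_upper)
  finally show ?thesis .
qed

lemma geom_poly_factor_const:
  assumes p: "prime p" and AB: "A * B = geom_poly p"
  shows "degree A = 0 \<or> degree B = 0"
proof -
  have p0: "p > 0"
    using p prime_gt_0_nat by blast
  let ?f = "pcompose (geom_poly p) [:1, 1:]"
  have deg: "degree ?f = p - 1"
    using p0 by (simp add: degree_pcompose degree_geom_poly)
  have lead: "\<not> int p dvd lead_coeff ?f"
    using deg p0 prime_gt_1_nat[OF p] by (simp add: coeff_geom_poly_shift)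
  have low: "\<forall>i<degree ?f. int p dvd coeff ?f i"
    using deg p0 p by (auto simp: coeff_geom_poly_shift dvd_choose_prime)
  have const: "\<not> (int p)\<^sup>2 dvd coeff ?f 0"
    using coeff_geom_poly_shift[OF p0, of 0] prime_gt_1_nat[OF p]
    by (auto simp: power2_eq_square dest: zdvd_imp_le)
  have "?f = pcompose A [:1, 1:] * pcompose B [:1, 1:]"
    by (simp add: AB[symmetric] pcompose_mult)
  then have "degree (pcompose A [:1, 1:]) = 0 \<or> degree (pcompose B [:1, 1:]) = 0"
    using eisenstein_criterion[of "int p", OF _ _ lead low const] p by simp
  then show ?thesis
    by (simp add: degree_pcompose)
qed

lemma prime_elem_geom_poly:
  assumes p: "prime p"
  shows "prime_elem (geom_poly p)"
proof -
  have p0: "p > 0"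
    using p prime_gt_0_nat by blast
  have "irreducible (geom_poly p)"
  proof (rule irreducibleI)
    show "geom_poly p \<noteq> 0" "\<not> is_unit (geom_poly p)"
      using content_geom_poly[OF p0] degree_geom_poly[OF p0] prime_gt_1_nat[OF p]
      by (auto simp: is_unit_poly_iff)
  next
    fix A B assume AB: "geom_poly p = A * B"
    have "content A * content B = 1"
      using content_geom_poly[OF p0] by (simp add: AB content_mult)
    then have "is_unit (content A)" "is_unit (content B)"
      by (metis dvd_triv_left dvd_triv_right)+
    moreover have "is_unit C" if "degree C = 0" "is_unit (content C)" for C :: "int poly"
      using that by (elim degree_eq_zeroE) (simp add: is_unit_const_poly_iff)
    ultimately show "is_unit A \<or> is_unit B"
      using geom_poly_factor_const[OF p AB[symmetric]] by blast
  qed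
  then show ?thesis
    by (simp add: prime_elem_iff_irreducible)
qed

section \<open>Vanishing sums of \<open>p\<close>-th roots of unity\<close>

definition omega :: "nat \<Rightarrow> complex" where
  "omega p = cis (2 * pi / real p)"

lemma omega_pow: "omega p ^ k = root_pow p (int k)"
  by (simp add: omega_def root_pow_def DeMoivre mult_ac)

lemma root_pow_add: "root_pow p (a + b) = root_pow p a * root_pow p b"
  by (simp add: root_pow_def cis_mult add_divide_distrib distrib_left)

lemma root_pow_mult_of_nat: "root_pow p (a * int k) = root_pow p a ^ k"
  by (simp add: root_pow_def DeMoivre mult_ac)

lemma root_pow_mult_cnj: "root_pow p a * cnj (root_pow p b) = root_pow p (a - b)"
  by (simp add: root_pow_def cis_cnj cis_mult diff_divide_distrib right_diff_distrib)

lemma root_pow_multiple: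
  assumes "p > 0"
  shows "root_pow p (int p * q) = 1"
proof -
  have "2 * pi * real_of_int (int p * q) / real p = 2 * pi * real_of_int q"
    using assms by simp
  then show ?thesis
    by (simp only: root_pow_def) (rule cis_multiple_2pi, simp)
qed

lemma root_pow_mod:
  assumes "p > 0"
  shows "root_pow p (m mod int p) = root_pow p m"
proof -
  have "root_pow p m = root_pow p (int p * (m div int p)) * root_pow p (m mod int p)"
    by (simp flip: root_pow_add)
  then show ?thesis
    using assms by (simp add: root_pow_multiple)
qed

lemma root_pow_cong: "p > 0 \<Longrightarrow> [a = b] (mod int p) \<Longrightarrow> root_pow p a = root_pow p b"
  by (metis cong_def root_pow_mod)

lemma root_pow_eq_omega_pow: "p > 0 \<Longrightarrow> root_pow p m = omega p ^ nat (m mod int p)"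
  by (simp add: omega_pow root_pow_mod)

lemma root_pow_eq_1_iff:
  assumes p: "p > 0"
  shows "root_pow p m = 1 \<longleftrightarrow> int p dvd m"
proof
  assume "root_pow p m = 1"
  then have "root_pow p (int (nat (m mod int p))) = 1"
    using p by (simp add: root_pow_mod)
  then have "cis (2 * pi * real (nat (m mod int p)) / real p) = 1"
    by (simp only: root_pow_def of_int_of_nat_eq)
  then have eq: "cis (2 * pi * real (nat (m mod int p)) / real p) = cis (2 * pi * real 0 / real p)"
    by simp
  have "inj_on (\<lambda>k. cis (2 * pi * real k / real p)) {..<p}"
    using bij_betw_roots_unity[OF p] by (simp add: bij_betw_def)
  then have "nat (m mod int p) = 0"
    by (rule inj_onD[where f = "\<lambda>k. cis (2 * pi * real k / real p)", OF _ eq])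
      (use p in \<open>simp_all add: nat_less_iff\<close>)
  then show "int p dvd m"
    using p pos_mod_sign[of "int p" m] by (simp add: dvd_eq_mod_eq_0 del: pos_mod_sign)
next
  assume "int p dvd m"
  then show "root_pow p m = 1"
    using p root_pow_multiple by auto
qed

lemma sum_powers_root_of_unity:
  fixes z :: "'a::field"
  assumes "z ^ n = 1" "z \<noteq> 1"
  shows "(\<Sum>j<n. z ^ j) = 0"
  using assms by (simp add: geometric_sum)

lemma sum_omega_pow:
  assumes "p > 1"
  shows "(\<Sum>i<p. omega p ^ i) = 0"
proof (rule sum_powers_root_of_unity)
  show "omega p ^ p = 1"
    using assms root_pow_multiple[of p 1] by (simp add: omega_pow)
  show "omega p \<noteq> 1"
    using assms omega_pow[of p 1] by (simp add: root_pow_eq_1_iff)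
qed

text \<open>A root \<open>P\<close> of least degree pseudo-divides a multiple of \<open>geom_poly p\<close> exactly, the
  remainder being a root of smaller degree; so the prime \<open>geom_poly p\<close> divides \<open>P\<close>.\<close>

lemma omega_not_root_of_low_degree:
  assumes p: "prime p" and "P \<noteq> 0" and "degree P < p - 1"
  shows "poly (map_poly of_int P) (omega p) \<noteq> 0"
  using assms(2,3)
proof (induction "degree P" arbitrary: P rule: less_induct)
  case less
  let ?ev = "\<lambda>Q :: int poly. poly (map_poly of_int Q) (omega p)"
  have p1: "p > 1"
    using prime_gt_1_nat[OF p] .
  show ?case
  proof
    assume root: "?ev P = 0"
    have "degree P \<noteq> 0"
    proof
      assume "degree P = 0"
      then obtain c where "P = [:c:]"
        by (rule degree_eq_zeroE)
      then show False
        using root less.prems by (simp add: map_poly_pCons)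
    qed
    define r where "r = pseudo_mod (geom_poly p) P"
    obtain a q where a: "a \<noteq> 0" and div: "smult a (geom_poly p) = P * q + r"
      using pseudo_mod(1)[OF less.prems(1)] unfolding r_def by blast
    have "of_int a * ?ev (geom_poly p) = ?ev P * ?ev q + ?ev r"
      using arg_cong[OF div, of ?ev]
      by (simp add: map_poly_of_int_mult map_poly_of_int_add map_poly_smult)
    then have "?ev r = 0"
      using root sum_omega_pow[OF p1] by (simp add: poly_geom_poly)
    have "r = 0"
    proof (rule ccontr)
      assume "r \<noteq> 0"
      then have "degree r < degree P"
        using pseudo_mod(2)[OF less.prems(1)] unfolding r_def by blast
      then show False
        using less.hyps[of r] \<open>r \<noteq> 0\<close> less.prems(2) \<open>?ev r = 0\<close> by simp
    qed
    then have "smult a (geom_poly p) = P * q"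
      using div by simp
    then have "geom_poly p dvd P"
      using prime_elem_dvd_if_smult_eq_mult[OF prime_elem_geom_poly[OF p] a] \<open>degree P \<noteq> 0\<close>
      by blast
    then show False
      using dvd_imp_degree_le[of "geom_poly p" P] less.prems p1 by (simp add: degree_geom_poly)
  qed
qed

lemma vanishing_sum_omega_pow:
  fixes c :: "nat \<Rightarrow> int"
  assumes p: "prime p" and sum0: "(\<Sum>r<p. of_int (c r) * omega p ^ r) = 0" and r: "r < p"
  shows "c r = c (p - 1)"
proof -
  have p1: "p > 1"
    using prime_gt_1_nat[OF p] .
  define P where "P = (\<Sum>i<p. monom (c i - c (p - 1)) i)"
  have coeff_P: "coeff P i = (if i < p then c i - c (p - 1) else 0)" for i
    by (simp add: P_def coeff_sum)
  have deg: "degree P \<le> p - 2"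
  proof (rule degree_le, intro allI impI)
    fix i assume "p - 2 < i"
    then have "i < p \<Longrightarrow> i = p - 1"
      using p1 by linarith
    then show "coeff P i = 0"
      by (auto simp: coeff_P)
  qed
  have "degree (map_poly (of_int :: int \<Rightarrow> complex) P) \<le> p - 1"
    using map_poly_degree_leq[of "of_int :: int \<Rightarrow> complex" P] deg by linarith
  then have "poly (map_poly of_int P) (omega p) = (\<Sum>i\<le>p - 1. of_int (coeff P i) * omega p ^ i)"
    by (simp add: poly_eq_sum_coeff coeff_map_poly)
  also have "\<dots> = (\<Sum>i<p. of_int (c i - c (p - 1)) * omega p ^ i)"
    using p1 by (simp add: coeff_P lessThan_Suc_atMost[symmetric])
  also have "\<dots> = (\<Sum>i<p. of_int (c i) * omega p ^ i) - of_int (c (p - 1)) * (\<Sum>i<p. omega p ^ i)"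
    by (simp add: sum_distrib_left sum_subtractf left_diff_distrib)
  also have "\<dots> = 0"
    using sum0 sum_omega_pow[OF p1] by simp
  finally have "P = 0"
    using omega_not_root_of_low_degree[OF p, of P] deg p1 by fastforce
  then show ?thesis
    using coeff_P[of r] r by (cases "r = p - 1") auto
qed

lemma bij_betw_if_sum_omega_pow_eq_0:
  assumes p: "prime p" and g: "g ` {..<p} \<subseteq> {..<p}" and sum0: "(\<Sum>j<p. omega p ^ g j) = 0"
  shows "bij_betw g {..<p} {..<p}"
proof -
  define c where "c r = int (card {j\<in>{..<p}. g j = r})" for r
  have "(\<Sum>r<p. of_int (c r) * omega p ^ r) = 0"
    using sum_by_fibres[OF g, of "\<lambda>r. omega p ^ r"] sum0 by (simp add: c_def)
  then have c_const: "c r = c (p - 1)" if "r < p" for r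
    using vanishing_sum_omega_pow[OF p _ that] by blast
  have "int p = (\<Sum>r<p. c r)"
    using sum_by_fibres[OF g, of "\<lambda>_. 1::int"] by (simp add: c_def)
  also have "\<dots> = (\<Sum>r<p. c (p - 1))"
    by (rule sum.cong[OF refl]) (rule c_const, simp)
  also have "\<dots> = int p * c (p - 1)"
    by simp
  finally have "c (p - 1) = 1"
    using prime_gt_0_nat[OF p] by simp
  then have fibre: "card {j\<in>{..<p}. g j = r} = 1" if "r < p" for r
    using c_const[OF that] by (simp add: c_def)
  have "inj_on g {..<p}"
  proof (rule inj_onI)
    fix a b assume a: "a \<in> {..<p}" and b: "b \<in> {..<p}" and ab: "g a = g b"
    have "g a < p"
      using g a by auto
    then obtain x where x: "{j\<in>{..<p}. g j = g a} = {x}"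
      using fibre by (meson card_1_singletonE)
    have "a \<in> {j\<in>{..<p}. g j = g a}" "b \<in> {j\<in>{..<p}. g j = g a}"
      using a b ab by auto
    then show "a = b"
      unfolding x by simp
  qed
  then show ?thesis
    using g by (simp add: bij_betw_def endo_inj_surj)
qed

section \<open>Power sums and interpolation modulo a prime\<close>

lemma fermat_theorem_int:
  assumes p: "prime p" and x: "\<not> int p dvd x"
  shows "[x ^ (p - 1) = 1] (mod int p)"
proof -
  define y where "y = nat (x mod int p)"
  have p0: "int p > 0"
    using prime_gt_0_nat[OF p] by simp
  have xy: "[x = int y] (mod int p)"
    using p0 by (simp add: y_def cong_def)
  have "x mod int p \<noteq> 0"
    using x by (simp add: dvd_eq_mod_eq_0)
  moreover have "0 \<le> x mod int p"
    using p0 by simp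
  ultimately have "0 < x mod int p"
    by linarith
  then have "0 < y" "y < p"
    using p0 unfolding y_def by (simp_all add: nat_less_iff)
  then have "\<not> p dvd y"
    by (simp add: nat_dvd_not_less)
  then have "[y ^ (p - 1) = 1] (mod p)"
    by (rule fermat_theorem[OF p])
  then have "[int y ^ (p - 1) = 1] (mod int p)"
    by (simp flip: cong_int_iff)
  then show ?thesis
    using cong_pow[OF xy, of "p - 1"] by (rule cong_trans[rotated])
qed

lemma power_Suc_eq_sum_power_sums:
  "(of_nat n :: 'a::comm_ring_1) ^ Suc k = (\<Sum>t\<le>k. of_nat (Suc k choose t) * (\<Sum>x<n. of_nat x ^ t))"
proof -
  have "of_nat (Suc x) ^ Suc k - of_nat x ^ Suc k
      = (\<Sum>t\<le>k. of_nat (Suc k choose t) * (of_nat x :: 'a) ^ t)" for x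
    using binomial_ring[of "of_nat x :: 'a" 1 "Suc k"] by (simp add: sum.atMost_Suc ac_simps)
  then have "(of_nat n :: 'a) ^ Suc k = (\<Sum>x<n. \<Sum>t\<le>k. of_nat (Suc k choose t) * of_nat x ^ t)"
    using sum_lessThan_telescope[of "\<lambda>x. (of_nat x :: 'a) ^ Suc k" n] by simp
  also have "\<dots> = (\<Sum>t\<le>k. of_nat (Suc k choose t) * (\<Sum>x<n. of_nat x ^ t))"
    by (subst sum.swap) (simp add: sum_distrib_left)
  finally show ?thesis .
qed

lemma power_sum_mod_prime:
  assumes p: "prime p" and k: "k < p - 1"
  shows "[(\<Sum>x<p. int x ^ k) = 0] (mod int p)"
  using k
proof (induction k rule: less_induct)
  case (less k)
  let ?lower = "\<Sum>t<k. of_nat (Suc k choose t) * (\<Sum>x<p. int x ^ t)"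
  have eq: "int p ^ Suc k = ?lower + int (Suc k) * (\<Sum>x<p. int x ^ k)"
    by (subst power_Suc_eq_sum_power_sums) (simp add: lessThan_Suc_atMost[symmetric])
  have lower: "int p dvd ?lower"
  proof (rule dvd_sum)
    fix t assume "t \<in> {..<k}"
    then show "int p dvd of_nat (Suc k choose t) * (\<Sum>x<p. int x ^ t)"
      using less.IH[of t] less.prems by (intro dvd_mult) (simp add: cong_0_iff)
  qed
  have "int p dvd int p ^ Suc k"
    by simp
  then have "int p dvd int (Suc k) * (\<Sum>x<p. int x ^ k)"
    by (simp only: eq dvd_add_right_iff[OF lower])
  moreover have "\<not> int p dvd int (Suc k)"
    using less.prems by (simp only: int_dvd_int_iff) (simp add: nat_dvd_not_less)
  ultimately show ?case
    using p by (simp add: cong_0_iff prime_dvd_mult_iff del: of_nat_Suc)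
qed

lemma power_sum_top_mod_prime:
  assumes p: "prime p"
  shows "[(\<Sum>x<p. int x ^ (p - 1)) = - 1] (mod int p)"
proof -
  have p1: "p > 1"
    using prime_gt_1_nat[OF p] .
  have "[int x ^ (p - 1) = 1] (mod int p)" if "x \<in> {1..<p}" for x
    using that by (intro fermat_theorem_int[OF p]) (auto dest: zdvd_imp_le)
  then have "[(\<Sum>x\<in>{1..<p}. int x ^ (p - 1)) = (\<Sum>x\<in>{1..<p}. 1)] (mod int p)"
    by (rule cong_sum)
  moreover have "{..<p} = insert 0 {1..<p}"
    using p1 by auto
  ultimately have "[(\<Sum>x<p. int x ^ (p - 1)) = int p - 1] (mod int p)"
    using p1 by (simp add: power_0_left)
  then show ?thesis
    by (simp add: cong_def mod_diff_left_eq[symmetric])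
qed

lemma sum_poly_mod_prime:
  fixes G :: "int poly"
  assumes p: "prime p" and deg: "degree G \<le> p - 1"
  shows "[(\<Sum>x<p. poly G (int x)) = - coeff G (p - 1)] (mod int p)"
proof -
  have "(\<Sum>x<p. poly G (int x)) = (\<Sum>i\<le>p - 1. coeff G i * (\<Sum>x<p. int x ^ i))"
    using deg by (simp add: poly_eq_sum_coeff sum_distrib_left sum.swap[of _ "{..<p}"])
  also have "\<dots> = (\<Sum>i<p - 1. coeff G i * (\<Sum>x<p. int x ^ i))
      + coeff G (p - 1) * (\<Sum>x<p. int x ^ (p - 1))"
    by (simp add: lessThan_Suc_atMost[symmetric])
  also have "[\<dots> = (\<Sum>i<p - 1. coeff G i * 0) + coeff G (p - 1) * - 1] (mod int p)"
    by (intro cong_add cong_sum cong_mult cong_refl power_sum_mod_prime[OF p]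
        power_sum_top_mod_prime[OF p]) simp
  finally show ?thesis
    by simp
qed

lemma fermat_indicator:
  assumes p: "prime p" and x: "x < p" and a: "a < p"
  shows "[1 - (int x - int a) ^ (p - 1) = (if x = a then 1 else 0)] (mod int p)"
proof (cases "x = a")
  case True
  then show ?thesis
    using prime_gt_1_nat[OF p] by (simp add: power_0_left)
next
  case False
  have "\<not> [x = a] (mod p)"
    using False x a by (auto dest: cong_less_modulus_unique_nat)
  then have "\<not> int p dvd (int x - int a)"
    by (simp add: cong_iff_dvd_diff flip: cong_int_iff)
  then have "[1 - (int x - int a) ^ (p - 1) = 1 - 1] (mod int p)"
    by (intro cong_diff cong_refl fermat_theorem_int[OF p])
  then show ?thesis
    using False by simp
qed

lemma poly_map_poly_mod_cong:
  fixes F :: "int poly"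
  shows "[poly (map_poly (\<lambda>c. c mod m) F) x = poly F x] (mod m)"
proof -
  have "poly (map_poly (\<lambda>c. c mod m) F) x = (\<Sum>i\<le>degree F. coeff F i mod m * x ^ i)"
    by (subst poly_eq_sum_coeff[OF map_poly_degree_leq]) (simp add: coeff_map_poly)
  also have "[\<dots> = (\<Sum>i\<le>degree F. coeff F i * x ^ i)] (mod m)"
    by (intro cong_sum cong_mult cong_refl) (simp add: cong_def)
  also have "(\<Sum>i\<le>degree F. coeff F i * x ^ i) = poly F x"
    by (rule poly_eq_sum_coeff[symmetric]) simp
  finally show ?thesis .
qed

lemma interpolation_mod_prime:
  fixes f :: "nat \<Rightarrow> int"
  assumes p: "prime p"
  obtains F :: "int poly" where "degree F \<le> p - 1" and "\<forall>i. coeff F i \<in> {0..<int p}"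
    and "\<forall>x<p. [poly F (int x) = f x] (mod int p)"
proof
  define F0 where "F0 = (\<Sum>a<p. smult (f a) (1 - [:- int a, 1:] ^ (p - 1)))"
  define F where "F = map_poly (\<lambda>c. c mod int p) F0"
  have "degree F0 \<le> p - 1"
    unfolding F0_def
  proof (intro degree_sum_le order.trans[OF degree_smult_le] order.trans[OF degree_diff_le])
    show "degree ([:- int a, 1:] ^ (p - 1)) \<le> p - 1" for a
      using degree_power_le[of "[:- int a, 1:]" "p - 1"] by simp
  qed simp_all
  then show "degree F \<le> p - 1"
    unfolding F_def using map_poly_degree_leq order.trans by blast
  show "\<forall>i. coeff F i \<in> {0..<int p}"
    using prime_gt_0_nat[OF p] by (simp add: F_def coeff_map_poly)
  show "\<forall>x<p. [poly F (int x) = f x] (mod int p)"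
  proof (intro allI impI)
    fix x assume x: "x < p"
    have "[poly F (int x) = poly F0 (int x)] (mod int p)"
      unfolding F_def by (rule poly_map_poly_mod_cong)
    also have "poly F0 (int x) = (\<Sum>a<p. f a * (1 - (int x - int a) ^ (p - 1)))"
      by (simp add: F0_def poly_sum)
    also have "[\<dots> = (\<Sum>a<p. f a * (if x = a then 1 else 0))] (mod int p)"
      using x by (intro cong_sum cong_mult cong_refl fermat_indicator[OF p]) auto
    also have "(\<Sum>a<p. f a * (if x = a then 1 else 0)) = (\<Sum>a<p. if x = a then f a else 0)"
      by (rule sum.cong) auto
    also have "\<dots> = f x"
      using x by simp
    finally show "[poly F (int x) = f x] (mod int p)" .
  qed
qed

lemma cong_shift_mod:
  fixes x s p :: nat
  assumes "s \<le> p"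
  shows "[int ((x + p - s) mod p) = int x - int s] (mod int p)"
proof -
  have "int ((x + p - s) mod p) = (int x - int s + int p) mod int p"
    using assms by (simp add: zmod_int of_nat_diff algebra_simps)
  then show ?thesis
    by (simp add: cong_def)
qed

lemma shift_mod_involution:
  fixes x s p :: nat
  assumes x: "x < p" and s: "s < p"
  shows "(x + p - (x + p - s) mod p) mod p = s"
proof -
  let ?t = "(x + p - s) mod p"
  have "?t < p"
    using s by (intro mod_less_divisor) linarith
  then have "[int ((x + p - ?t) mod p) = int x - int ?t] (mod int p)"
    by (intro cong_shift_mod) simp
  also have "[int x - int ?t = int x - (int x - int s)] (mod int p)"
    using s by (intro cong_diff cong_refl cong_shift_mod) simp
  finally have "[(x + p - ?t) mod p = s] (mod p)"
    by (simp flip: cong_int_iff)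
  then show ?thesis
    by (rule cong_less_modulus_unique_nat) (use s in auto)
qed

lemma bij_betw_shift_mod:
  fixes x p :: nat
  assumes "x < p"
  shows "bij_betw (\<lambda>s. (x + p - s) mod p) {..<p} {..<p}"
proof (rule bij_betw_byWitness[where f' = "\<lambda>s. (x + p - s) mod p"])
  have "p > 0"
    using assms by simp
  then show "(\<lambda>s. (x + p - s) mod p) ` {..<p} \<subseteq> {..<p}"
    by auto
qed (use assms shift_mod_involution in auto)

section \<open>Planar functions modulo a prime are quadratic\<close>

text \<open>Functions on \<open>\<int>/p\<int>\<close> are given by their values at \<open>0, \<dots>, p - 1\<close>, and
  \<open>(x + p - s) mod p\<close> represents \<open>x - s\<close>.\<close>

definition shift_diff :: "nat \<Rightarrow> (nat \<Rightarrow> int) \<Rightarrow> nat \<Rightarrow> nat \<Rightarrow> nat" where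
  "shift_diff p f s x = nat ((f ((x + p - s) mod p) - f x) mod int p)"

definition planar_mod :: "nat \<Rightarrow> (nat \<Rightarrow> int) \<Rightarrow> bool" where
  "planar_mod p f \<longleftrightarrow> (\<forall>s. 0 < s \<and> s < p \<longrightarrow> bij_betw (shift_diff p f s) {..<p} {..<p})"

lemma planar_mod_cong:
  assumes f: "planar_mod p f" and fh: "\<forall>x<p. [f x = h x] (mod int p)"
  shows "planar_mod p h"
  unfolding planar_mod_def
proof (intro allI impI)
  fix s assume s: "0 < s \<and> s < p"
  have "[f ((x + p - s) mod p) - f x = h ((x + p - s) mod p) - h x] (mod int p)" if "x < p" for x
    using fh that s by (intro cong_diff) auto
  then have "shift_diff p f s x = shift_diff p h s x" if "x \<in> {..<p}" for x
    using that unfolding cong_def shift_diff_def by simp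
  moreover have "bij_betw (shift_diff p f s) {..<p} {..<p}"
    using f s unfolding planar_mod_def by blast
  ultimately show "bij_betw (shift_diff p h s) {..<p} {..<p}"
    using bij_betw_cong[of "{..<p}" "shift_diff p f s" "shift_diff p h s"] by blast
qed

lemma planar_mod_power_sum:
  assumes p: "prime p" and f: "planar_mod p f" and s: "0 < s" "s < p" and k: "k < p - 1"
  shows "[(\<Sum>x<p. (f ((x + p - s) mod p) - f x) ^ k) = 0] (mod int p)"
proof -
  have g: "bij_betw (shift_diff p f s) {..<p} {..<p}"
    using f s unfolding planar_mod_def by blast
  have "[(\<Sum>x<p. (f ((x + p - s) mod p) - f x) ^ k) = (\<Sum>x<p. int (shift_diff p f s x) ^ k)] (mod int p)"
    using s by (intro cong_sum cong_pow) (simp add: shift_diff_def cong_def)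
  also have "(\<Sum>x<p. int (shift_diff p f s x) ^ k) = (\<Sum>r<p. int r ^ k)"
    using sum.reindex_bij_betw[OF g, of "\<lambda>r. int r ^ k"] .
  also have "[\<dots> = 0] (mod int p)"
    by (rule power_sum_mod_prime[OF p k])
  finally show ?thesis .
qed

lemma not_planar_mod_affine:
  assumes p: "p > 1"
  shows "\<not> planar_mod p (\<lambda>x. a * int x + b)"
proof
  assume "planar_mod p (\<lambda>x. a * int x + b)"
  then have "inj_on (shift_diff p (\<lambda>x. a * int x + b) 1) {..<p}"
    using p unfolding planar_mod_def bij_betw_def by auto
  moreover have "shift_diff p (\<lambda>x. a * int x + b) 1 = (\<lambda>x. nat ((- a) mod int p))"
  proof
    fix x
    have "[int ((x + p - 1) mod p) = int x - 1] (mod int p)"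
      using p cong_shift_mod[of 1 p x] by simp
    then have "[a * int ((x + p - 1) mod p) + b - (a * int x + b) = a * (int x - 1) + b - (a * int x + b)] (mod int p)"
      by (intro cong_diff cong_add cong_mult cong_refl)
    then have "[a * int ((x + p - 1) mod p) + b - (a * int x + b) = - a] (mod int p)"
      by (simp add: algebra_simps)
    then show "shift_diff p (\<lambda>x. a * int x + b) 1 x = nat ((- a) mod int p)"
      unfolding shift_diff_def cong_def by simp
  qed
  ultimately have "inj_on (\<lambda>x::nat. nat ((- a) mod int p)) {..<p}"
    by simp
  from inj_onD[OF this, of 0 1] p show False
    by simp
qed

lemma planar_mod_double_sum:
  assumes p: "prime p" and f: "planar_mod p f" and K: "0 < K" "K < p - 1"
  shows "[(\<Sum>x<p. \<Sum>y<p. (int y - int x) ^ J * (f y - f x) ^ K) = 0] (mod int p)"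
proof -
  let ?D = "\<lambda>s x. f ((x + p - s) mod p) - f x"
  have reindex: "(\<Sum>y<p. (int y - int x) ^ J * (f y - f x) ^ K)
      = (\<Sum>s<p. (int ((x + p - s) mod p) - int x) ^ J * ?D s x ^ K)" if "x < p" for x
    using sum.reindex_bij_betw[OF bij_betw_shift_mod[OF that],
        of "\<lambda>y. (int y - int x) ^ J * (f y - f x) ^ K"] by simp
  have shift: "[(int ((x + p - s) mod p) - int x) ^ J * ?D s x ^ K = (- int s) ^ J * ?D s x ^ K] (mod int p)"
    if "s < p" for x s
  proof -
    have "[int ((x + p - s) mod p) - int x = (int x - int s) - int x] (mod int p)"
      using cong_shift_mod[of s p x] that by (intro cong_diff cong_refl) simp
    then show ?thesis
      by (intro cong_mult cong_pow cong_refl) simp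
  qed
  have "[(\<Sum>x<p. \<Sum>y<p. (int y - int x) ^ J * (f y - f x) ^ K)
      = (\<Sum>x<p. \<Sum>s<p. (- int s) ^ J * ?D s x ^ K)] (mod int p)"
  proof (rule cong_sum)
    fix x assume "x \<in> {..<p}"
    then have x: "x < p"
      by simp
    show "[(\<Sum>y<p. (int y - int x) ^ J * (f y - f x) ^ K) = (\<Sum>s<p. (- int s) ^ J * ?D s x ^ K)] (mod int p)"
      unfolding reindex[OF x] by (intro cong_sum shift) auto
  qed
  also have "(\<Sum>x<p. \<Sum>s<p. (- int s) ^ J * ?D s x ^ K) = (\<Sum>s<p. (- int s) ^ J * (\<Sum>x<p. ?D s x ^ K))"
    by (subst sum.swap) (simp add: sum_distrib_left)
  also have "[\<dots> = (\<Sum>s<p. (- int s) ^ J * 0)] (mod int p)"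
  proof (intro cong_sum cong_mult cong_refl)
    fix s assume "s \<in> {..<p}"
    then show "[(\<Sum>x<p. ?D s x ^ K) = 0] (mod int p)"
      using K planar_mod_power_sum[OF p f, of s K] by (cases "s = 0") (simp_all add: power_0_left)
  qed
  finally show ?thesis
    by simp
qed

definition poly_moment :: "nat \<Rightarrow> int poly \<Rightarrow> nat \<Rightarrow> nat \<Rightarrow> int" where
  "poly_moment p F l i = (\<Sum>x<p. int x ^ l * poly F (int x) ^ i)"

lemma poly_moment_mod:
  assumes p: "prime p" and F: "F \<noteq> 0" and deg: "l + i * degree F \<le> p - 1"
  shows "[poly_moment p F l i = (if l + i * degree F = p - 1 then - (lead_coeff F ^ i) else 0)] (mod int p)"
proof -
  define G where "G = monom 1 l * F ^ i"
  have deg_G: "degree G = l + i * degree F"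
    using F by (simp add: G_def degree_mult_eq degree_power_eq degree_monom_eq)
  have "poly_moment p F l i = (\<Sum>x<p. poly G (int x))"
    by (simp add: poly_moment_def G_def poly_monom)
  also have "[\<dots> = - coeff G (p - 1)] (mod int p)"
    using deg deg_G by (intro sum_poly_mod_prime[OF p]) simp
  also have "coeff G (p - 1) = (if l + i * degree F = p - 1 then lead_coeff F ^ i else 0)"
  proof (cases "l + i * degree F = p - 1")
    case True
    then have "coeff G (p - 1) = lead_coeff G"
      using deg_G by simp
    then show ?thesis
      using True by (simp add: G_def lead_coeff_mult lead_coeff_power degree_monom_eq)
  next
    case False
    then show ?thesis
      using deg deg_G by (simp add: coeff_eq_0)
  qed
  finally show ?thesis
    by (cases "l + i * degree F = p - 1") simp_all
qed

lemma eq_add_mult_imp_eq: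
  fixes l i r m d :: nat
  assumes eq: "l + i * d = r + m * d" and r: "r < d" and l: "l \<le> 2 * r"
  shows "l = r \<and> i = m"
proof -
  have "i = m"
  proof (rule ccontr)
    assume "i \<noteq> m"
    then consider "Suc i \<le> m" | "Suc m \<le> i"
      by linarith
    then show False
    proof cases
      case 1
      then have "Suc i * d \<le> m * d"
        by (rule mult_right_mono) simp
      then show False
        using eq r l by simp
    next
      case 2
      then have "Suc m * d \<le> i * d"
        by (rule mult_right_mono) simp
      then show False
        using eq r by simp
    qed
  qed
  then show ?thesis
    using eq by simp
qed

lemma poly_moment_product_mod:
  assumes p: "prime p" and F: "F \<noteq> 0" and div: "p - 1 = m * degree F + r" and r: "r < degree F"
    and l: "l \<le> 2 * r" and i: "i \<le> 2 * m" and li: "(l, i) \<noteq> (r, m)"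
  shows "[poly_moment p F l i * poly_moment p F (2 * r - l) (2 * m - i) = 0] (mod int p)"
proof -
  let ?d = "degree F"
  have "(2 * m - i) * ?d = 2 * (m * ?d) - i * ?d"
    by (simp add: diff_mult_distrib)
  moreover have "i * ?d \<le> 2 * (m * ?d)"
    using i by (metis mult.assoc mult_le_mono1)
  ultimately have sum: "(l + i * ?d) + ((2 * r - l) + (2 * m - i) * ?d) = 2 * (p - 1)"
    using div l by linarith
  consider "l + i * ?d < p - 1" | "(2 * r - l) + (2 * m - i) * ?d < p - 1" | "l + i * ?d = p - 1"
    using sum by linarith
  then show ?thesis
  proof cases
    case 1
    then have "[poly_moment p F l i = 0] (mod int p)"
      using poly_moment_mod[OF p F, of l i] by simp
    then show ?thesis
      using cong_mult[OF _ cong_refl] by fastforce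
  next
    case 2
    then have "[poly_moment p F (2 * r - l) (2 * m - i) = 0] (mod int p)"
      using poly_moment_mod[OF p F, of "2 * r - l" "2 * m - i"] by simp
    then show ?thesis
      using cong_mult[OF cong_refl] by fastforce
  next
    case 3
    then have "l = r \<and> i = m"
      using div r l by (intro eq_add_mult_imp_eq) (simp_all add: ac_simps)
    with li show ?thesis
      by simp
  qed
qed

lemma prime_not_dvd_binomial:
  assumes p: "prime p" and n: "n < p" and k: "k \<le> n"
  shows "\<not> p dvd (n choose k)"
proof
  assume "p dvd (n choose k)"
  then have "p dvd fact k * fact (n - k) * (n choose k)"
    by simp
  then have "p dvd fact n"
    by (simp add: binomial_fact_lemma[OF k])
  with n show False
    by (simp add: prime_dvd_fact_iff[OF p])
qed

lemma double_sum_poly_mod: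
  assumes p: "prime p" and F: "F \<noteq> 0" and div: "p - 1 = m * degree F + r" and r: "r < degree F"
  shows "[(\<Sum>x<p. \<Sum>y<p. (int y - int x) ^ (2 * r) * (poly F (int y) - poly F (int x)) ^ (2 * m))
    = int (2 * r choose r) * int (2 * m choose m) * (- 1) ^ (r + m) * lead_coeff F ^ (2 * m)] (mod int p)"
proof -
  let ?M = "poly_moment p F"
  define c where "c l i = int (2 * r choose l) * int (2 * m choose i) * (- 1) ^ (2 * r - l) * (- 1) ^ (2 * m - i)"
    for l i
  define t where "t z = c (fst z) (snd z) * (?M (fst z) (snd z) * ?M (2 * r - fst z) (2 * m - snd z))" for z
  let ?Z = "{..2 * r} \<times> {..2 * m}"
  have "(\<Sum>x<p. \<Sum>y<p. (int y - int x) ^ (2 * r) * (poly F (int y) - poly F (int x)) ^ (2 * m))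
      = (\<Sum>l\<le>2 * r. \<Sum>i\<le>2 * m. t (l, i))"
    unfolding double_sum_diff_power_expand t_def c_def poly_moment_def by simp
  also have "\<dots> = (\<Sum>z\<in>?Z. t z)"
    by (simp add: sum.cartesian_product)
  also have "\<dots> = t (r, m) + (\<Sum>z\<in>?Z - {(r, m)}. t z)"
    by (rule sum.remove) simp_all
  also have "[\<dots> = t (r, m) + (\<Sum>z\<in>?Z - {(r, m)}. 0)] (mod int p)"
  proof (intro cong_add cong_refl cong_sum)
    fix z assume z: "z \<in> ?Z - {(r, m)}"
    obtain l i where z_eq: "z = (l, i)"
      by (cases z)
    have "[?M l i * ?M (2 * r - l) (2 * m - i) = 0] (mod int p)"
      using z z_eq by (intro poly_moment_product_mod[OF p F div r]) auto
    then have "[c l i * (?M l i * ?M (2 * r - l) (2 * m - i)) = c l i * 0] (mod int p)"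
      by (rule cong_mult[OF cong_refl])
    then show "[t z = 0] (mod int p)"
      by (simp add: t_def z_eq)
  qed
  also have "t (r, m) + (\<Sum>z\<in>?Z - {(r, m)}. 0) = c r m * (?M r m * ?M r m)"
    by (simp add: t_def)
  also have "[\<dots> = c r m * (- (lead_coeff F ^ m) * - (lead_coeff F ^ m))] (mod int p)"
  proof -
    have "r + m * degree F = p - 1"
      using div by simp
    then have "[?M r m = - (lead_coeff F ^ m)] (mod int p)"
      using poly_moment_mod[OF p F, of r m] by simp
    then show ?thesis
      by (intro cong_mult cong_refl)
  qed
  finally show ?thesis
    by (simp add: c_def mult_2 power_add mult.assoc)
qed

lemma planar_poly_degree_le_2:
  assumes p: "prime p" and planar: "planar_mod p (\<lambda>x. poly F (int x))"
    and deg: "degree F \<le> p - 1" and lead: "\<not> int p dvd lead_coeff F"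
  shows "degree F \<le> 2"
proof (rule ccontr)
  assume "\<not> degree F \<le> 2"
  define d where "d = degree F"
  define m where "m = (p - 1) div d"
  define r where "r = (p - 1) mod d"
  have d: "3 \<le> d"
    using \<open>\<not> degree F \<le> 2\<close> by (simp add: d_def)
  then have F: "F \<noteq> 0"
    by (auto simp: d_def)
  have div: "p - 1 = m * d + r" and r: "r < d"
    using d by (simp_all add: m_def r_def)
  have m: "1 \<le> m"
    using deg d by (simp add: m_def d_def div_greater_zero_iff Suc_le_eq)
  have "3 * m \<le> m * d" and "d \<le> m * d"
    using d m by simp_all
  then have K: "2 * m < p - 1" and J: "2 * r < p"
    using div r m by linarith+
  let ?c = "int (2 * r choose r) * int (2 * m choose m) * (- 1) ^ (r + m)"
  have "[(\<Sum>x<p. \<Sum>y<p. (int y - int x) ^ (2 * r) * (poly F (int y) - poly F (int x)) ^ (2 * m))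
      = ?c * lead_coeff F ^ (2 * m)] (mod int p)"
    using double_sum_poly_mod[OF p F] div r by (simp add: d_def)
  moreover have "[(\<Sum>x<p. \<Sum>y<p. (int y - int x) ^ (2 * r) * (poly F (int y) - poly F (int x)) ^ (2 * m))
      = 0] (mod int p)"
    using planar_mod_double_sum[OF p planar, of "2 * m" "2 * r"] K m by simp
  ultimately have "[?c * lead_coeff F ^ (2 * m) = 0] (mod int p)"
    using cong_sym cong_trans by blast
  moreover have "\<not> p dvd (2 * r choose r)" "\<not> p dvd (2 * m choose m)"
    using J K by (simp_all add: prime_not_dvd_binomial[OF p])
  moreover have "\<not> int p dvd (- 1) ^ (r + m)"
    using prime_gt_1_nat[OF p] by (cases "even (r + m)") auto
  moreover have pi: "prime (int p)"
    using p by simp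
  ultimately have "int p dvd lead_coeff F ^ (2 * m)"
    by (simp add: cong_0_iff prime_dvd_mult_iff)
  then show False
    using lead prime_dvd_power[OF pi] by blast
qed

lemma planar_mod_imp_quadratic:
  assumes p: "prime p" and f: "planar_mod p f"
  shows "\<exists>a b c. \<not> [a = 0] (mod int p) \<and> (\<forall>j<p. [f j = a * (int j)\<^sup>2 + b * int j + c] (mod int p))"
proof -
  obtain F where deg: "degree F \<le> p - 1" and coeffs: "\<forall>i. coeff F i \<in> {0..<int p}"
    and F: "\<forall>x<p. [poly F (int x) = f x] (mod int p)"
    using interpolation_mod_prime[OF p] .
  have planar: "planar_mod p (\<lambda>x. poly F (int x))"
    using planar_mod_cong[OF f] F by (simp add: cong_sym_eq)
  have "\<not> int p dvd coeff F i" if "coeff F i \<noteq> 0" for i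
  proof
    assume "int p dvd coeff F i"
    moreover have "0 < coeff F i" "coeff F i < int p"
      using coeffs that by (auto simp: less_le)
    ultimately show False
      using zdvd_imp_le by fastforce
  qed
  then have lead: "\<not> int p dvd lead_coeff F" if "F \<noteq> 0"
    using that by simp
  have "degree F \<le> 2"
    using planar_poly_degree_le_2[OF p planar deg lead] by fastforce
  then have poly_F: "poly F z = coeff F 2 * z\<^sup>2 + coeff F 1 * z + coeff F 0" for z
    by (simp add: poly_eq_sum_coeff numeral_2_eq_2 power2_eq_square algebra_simps)
  have "degree F = 2"
  proof (rule ccontr)
    assume "degree F \<noteq> 2"
    with \<open>degree F \<le> 2\<close> have "coeff F 2 = 0"
      by (simp add: coeff_eq_0)
    then have "(\<lambda>x. poly F (int x)) = (\<lambda>x. coeff F 1 * int x + coeff F 0)"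
      by (simp add: poly_F)
    then show False
      using planar not_planar_mod_affine prime_gt_1_nat[OF p] by metis
  qed
  then have "F \<noteq> 0"
    by auto
  with \<open>degree F = 2\<close> have "\<not> [coeff F 2 = 0] (mod int p)"
    using lead by (simp add: cong_0_iff)
  moreover have "\<forall>j<p. [f j = coeff F 2 * (int j)\<^sup>2 + coeff F 1 * int j + coeff F 0] (mod int p)"
    using F by (simp add: poly_F cong_sym_eq)
  ultimately show ?thesis
    by blast
qed

section \<open>Circulant Hadamard matrices\<close>

lemma circulant_mod_row:
  assumes circ: "circulant_mod p M" and i: "i < p" and j: "j < p"
  shows "[M i j = M 0 ((j + p - i) mod p)] (mod int p)"
proof -
  have "[int ((j + p - i) mod p) = int j - int i] (mod int p)"
    using i by (intro cong_shift_mod) simp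
  then have "(int j - int i) mod int p = (int ((j + p - i) mod p) - int 0) mod int p"
    by (simp add: cong_def)
  moreover have "(j + p - i) mod p < p"
    using i by simp
  ultimately show ?thesis
    using circ i j unfolding circulant_mod_def by blast
qed

lemma hadamard_imp_planar_mod:
  assumes p: "prime p" and circ: "circulant_mod p M"
    and H: "complex_hadamard p (\<lambda>i j. root_pow p (M i j))"
  shows "planar_mod p (M 0)"
  unfolding planar_mod_def
proof (intro allI impI)
  fix s assume s: "0 < s \<and> s < p"
  have p0: "p > 0"
    using s by simp
  have "shift_diff p (M 0) s ` {..<p} \<subseteq> {..<p}"
    using p0 by (auto simp: shift_diff_def nat_less_iff)
  moreover have "(\<Sum>j<p. omega p ^ shift_diff p (M 0) s j) = 0"
  proof -
    have "omega p ^ shift_diff p (M 0) s j = root_pow p (M s j) * cnj (root_pow p (M 0 j))" if "j < p" for j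
    proof -
      have "omega p ^ shift_diff p (M 0) s j = root_pow p (M 0 ((j + p - s) mod p) - M 0 j)"
        using p0 by (simp add: shift_diff_def root_pow_eq_omega_pow)
      also have "\<dots> = root_pow p (M s j - M 0 j)"
        using circulant_mod_row[OF circ _ that, of s] s p0
        by (intro root_pow_cong cong_diff cong_refl) (simp_all add: cong_sym)
      finally show ?thesis
        by (simp add: root_pow_mult_cnj)
    qed
    then have "(\<Sum>j<p. omega p ^ shift_diff p (M 0) s j) = (\<Sum>j<p. root_pow p (M s j) * cnj (root_pow p (M 0 j)))"
      by simp
    also have "\<dots> = 0"
      using H s unfolding complex_hadamard_def by auto
    finally show ?thesis .
  qed
  ultimately show "bij_betw (shift_diff p (M 0) s) {..<p} {..<p}"
    by (rule bij_betw_if_sum_omega_pow_eq_0[OF p])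
qed

lemma sum_root_pow_affine:
  assumes p: "p > 0" and \<alpha>: "\<not> int p dvd \<alpha>"
  shows "(\<Sum>j<p. root_pow p (\<alpha> * int j + \<beta>)) = 0"
proof -
  have "(\<Sum>j<p. root_pow p (\<alpha> * int j + \<beta>)) = root_pow p \<beta> * (\<Sum>j<p. root_pow p \<alpha> ^ j)"
    by (simp add: root_pow_add root_pow_mult_of_nat sum_distrib_left mult.commute)
  also have "(\<Sum>j<p. root_pow p \<alpha> ^ j) = 0"
  proof (rule sum_powers_root_of_unity)
    show "root_pow p \<alpha> ^ p = 1"
      using p root_pow_multiple[OF p, of \<alpha>] by (simp flip: root_pow_mult_of_nat add: mult.commute)
    show "root_pow p \<alpha> \<noteq> 1"
      using p \<alpha> by (simp add: root_pow_eq_1_iff)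
  qed
  finally show ?thesis
    by simp
qed

lemma circulant_mod_quadratic_row:
  assumes circ: "circulant_mod p M"
    and q: "\<forall>j<p. [M 0 j = a * (int j)\<^sup>2 + b * int j + c] (mod int p)"
    and i: "i < p" and j: "j < p"
  shows "[M i j = a * (int j - int i)\<^sup>2 + b * (int j - int i) + c] (mod int p)"
proof -
  have "[M i j = M 0 ((j + p - i) mod p)] (mod int p)"
    by (rule circulant_mod_row[OF circ i j])
  also have "[M 0 ((j + p - i) mod p)
      = a * (int ((j + p - i) mod p))\<^sup>2 + b * int ((j + p - i) mod p) + c] (mod int p)"
    using q j by simp
  also have "[a * (int ((j + p - i) mod p))\<^sup>2 + b * int ((j + p - i) mod p) + c
      = a * (int j - int i)\<^sup>2 + b * (int j - int i) + c] (mod int p)"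
    using cong_shift_mod[of i p j] i by (intro cong_add cong_mult cong_pow cong_refl) simp_all
  finally show ?thesis .
qed

lemma quadratic_imp_hadamard:
  assumes p: "prime p" and p3: "p \<ge> 3" and circ: "circulant_mod p M"
    and a: "\<not> [a = 0] (mod int p)" and q: "\<forall>j<p. [M 0 j = a * (int j)\<^sup>2 + b * int j + c] (mod int p)"
  shows "complex_hadamard p (\<lambda>i j. root_pow p (M i j))"
  unfolding complex_hadamard_def
proof (intro conjI allI impI)
  fix i j
  show "norm (root_pow p (M i j)) = 1"
    by (simp add: root_pow_def)
next
  fix i k assume i: "i < p" and k: "k < p" and ik: "i \<noteq> k"
  have p0: "p > 0"
    using p3 by simp
  define \<alpha> where "\<alpha> = 2 * a * (int k - int i)"
  define \<beta> where "\<beta> = (int k - int i) * (b - a * (int i + int k))"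
  have "root_pow p (M i j) * cnj (root_pow p (M k j)) = root_pow p (\<alpha> * int j + \<beta>)" if "j < p" for j
  proof -
    have "[M i j - M k j = (a * (int j - int i)\<^sup>2 + b * (int j - int i) + c)
        - (a * (int j - int k)\<^sup>2 + b * (int j - int k) + c)] (mod int p)"
      using circulant_mod_quadratic_row[OF circ q] i k that by (intro cong_diff)
    also have "(a * (int j - int i)\<^sup>2 + b * (int j - int i) + c)
        - (a * (int j - int k)\<^sup>2 + b * (int j - int k) + c) = \<alpha> * int j + \<beta>"
      by (simp add: \<alpha>_def \<beta>_def power2_eq_square algebra_simps)
    finally show ?thesis
      using p0 by (simp add: root_pow_mult_cnj root_pow_cong)
  qed
  moreover have "\<not> int p dvd \<alpha>"
  proof -
    have "\<not> int p dvd 2"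
      using p3 by (auto dest: zdvd_imp_le)
    moreover have "\<not> int p dvd a"
      using a by (simp add: cong_0_iff)
    moreover have "\<not> [k = i] (mod p)"
      using i k ik by (auto dest: cong_less_modulus_unique_nat)
    then have "\<not> int p dvd (int k - int i)"
      by (simp add: cong_iff_dvd_diff flip: cong_int_iff)
    moreover have "prime (int p)"
      using p by simp
    ultimately show ?thesis
      by (simp add: \<alpha>_def prime_dvd_mult_iff)
  qed
  ultimately show "(\<Sum>j<p. root_pow p (M i j) * cnj (root_pow p (M k j))) = 0"
    using sum_root_pow_affine[OF p0] by simp
qed

theorem theorem5p1:
  fixes p :: nat and M :: "nat \<Rightarrow> nat \<Rightarrow> int"
  assumes "prime p" and "p \<ge> 3" and "circulant_mod p M"
  shows "complex_hadamard p (\<lambda>i j. root_pow p (M i j)) \<longleftrightarrow>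
    (\<exists>a b c :: int. \<not> [a = 0] (mod int p) \<and>
       (\<forall>j<p. [M 0 j = a * (int j)^2 + b * int j + c] (mod int p)))"
proof
  assume "complex_hadamard p (\<lambda>i j. root_pow p (M i j))"
  then have "planar_mod p (M 0)"
    by (rule hadamard_imp_planar_mod[OF assms(1,3)])
  then show "\<exists>a b c :: int. \<not> [a = 0] (mod int p) \<and>
      (\<forall>j<p. [M 0 j = a * (int j)^2 + b * int j + c] (mod int p))"
    by (rule planar_mod_imp_quadratic[OF assms(1)])
next
  assume "\<exists>a b c :: int. \<not> [a = 0] (mod int p) \<and>
      (\<forall>j<p. [M 0 j = a * (int j)^2 + b * int j + c] (mod int p))"
  then show "complex_hadamard p (\<lambda>i j. root_pow p (M i j))"
    using quadratic_imp_hadamard[OF assms] by blast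
qed

end
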